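(* Let $F$ be a sensori-computational device, and let $R_1$ and $R_2$ be relations between sets of strings. If there exists a sensori-computational device $F_1$ such that $F_1$ output simulates $F$ modulo $R_1$, and there exists a sensori-computational device $F_2$ such that $F_2$ output simulates $F_1$ modulo $R_2$, then $F_2$ output simulates $F$ modulo the composite relation $R_1 ; R_2$.
   Context: A sensori-computational device is a 6-tuple $F=(V,V_0,Y,\tau,C,c)$ where $V$ is a non-empty finite set of states, $V_0\subseteq V$ is a non-empty set of initial states, $Y$ (also written $Y(F)$) is a finite set of observations, $\tau:V\times V\to\mathcal{P}(Y)$ is the transition function, $C$ is a set of outputs, and $c:V\to\mathcal{P}(C)\setminus\{\emptyset\}$ is the output function. For a string $s=y_1\cdots y_n\in Y^*$ and states $v,w$, $w$ is reached by $s$ from $v$ if there are states $w_0=v,w_1,\dots,w_n=w$ with $y_i\in\tau(w_{i-1},w_i)$ for all $i$. Let $\mathcal{R}_F(s)$ be the set of states reached by $s$ from some initial state. The language of $F$ is $\mathcal{L}(F)=\{s\in Y^*:\mathcal{R}_F(s)\neq\emptyset\}$, and $\mathcal{C}_F(s)=\bigcup_{v\in\mathcal{R}_F(s)}c(v)$. Given a relation $R\subseteq A\times B$ between sets of strings, a device $F'$ output simulates $F$ modulo $R$ if for every $s\in\mathcal{L}(F)$: (1) there exists $t\in\mathcal{L}(F')$ with $s\,R\,t$; and (2) for every $t\in B$ with $s\,R\,t$, we have $t\in\mathcal{L}(F')$ and $\mathcal{C}_F(s)\supseteq\mathcal{C}_{F'}(t)$. Relation composition is $R_1;R_2=\{(u,v):\exists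 r\ (u,r)\in R_1,\ (r,v)\in R_2\}$. *)

theory Defs
  imports Main
begin

text \<open>A sensori-computational device F = (V, V0, Y, tau, C, c).\<close>
record ('v, 'y, 'c) scdevice =
  states :: "'v set"
  init :: "'v set"
  obs :: "'y set"
  trans :: "'v \<Rightarrow> 'v \<Rightarrow> 'y set"
  outs :: "'c set"
  out :: "'v \<Rightarrow> 'c set"

definition scdevice :: "('v, 'y, 'c) scdevice \<Rightarrow> bool" where
  "scdevice F \<longleftrightarrow>
     finite (states F) \<and> states F \<noteq> {} \<and>
     init F \<subseteq> states F \<and> init F \<noteq> {} \<and>
     finite (obs F) \<and>
     (\<forall>v w. trans F v w \<subseteq> obs F) \<and>
     (\<forall>v \<in> states F. out F v \<subseteq> outs F \<and> out F v \<noteq> {})"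

inductive reaches :: "('v, 'y, 'c) scdevice \<Rightarrow> 'v \<Rightarrow> 'y list \<Rightarrow> 'v \<Rightarrow> bool"
  for F where
  nil: "v \<in> states F \<Longrightarrow> reaches F v [] v"
| cons: "v \<in> states F \<Longrightarrow> u \<in> states F \<Longrightarrow> y \<in> trans F v u \<Longrightarrow> reaches F u s w
          \<Longrightarrow> reaches F v (y # s) w"

definition reached :: "('v, 'y, 'c) scdevice \<Rightarrow> 'y list \<Rightarrow> 'v set" where
  "reached F s = {w. \<exists>v \<in> init F. reaches F v s w}"

definition lang :: "('v, 'y, 'c) scdevice \<Rightarrow> 'y list set" where
  "lang F = {s. set s \<subseteq> obs F \<and> reached F s \<noteq> {}}"

definition outputs_of :: "('v, 'y, 'c) scdevice \<Rightarrow> 'y list \<Rightarrow> 'c set" where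
  "outputs_of F s = (\<Union>v \<in> reached F s. out F v)"

definition output_simulates ::
  "('w, 'z, 'c) scdevice \<Rightarrow> ('v, 'y, 'c) scdevice \<Rightarrow> ('y list \<times> 'z list) set \<Rightarrow> bool" where
  "output_simulates F' F R \<longleftrightarrow>
     (\<forall>s \<in> lang F.
        (\<exists>t \<in> lang F'. (s, t) \<in> R) \<and>
        (\<forall>t. (s, t) \<in> R \<longrightarrow> t \<in> lang F' \<and> outputs_of F' t \<subseteq> outputs_of F s))"

end

theory Submission
  imports Defs
begin

lemma output_simulates_relcomp:
  assumes sim1: "output_simulates F1 F R1"
    and sim2: "output_simulates F2 F1 R2"
  shows "output_simulates F2 F (R1 O R2)"
  unfolding output_simulates_def
proof (intro ballI conjI allI impI)
  fix s assume s: "s \<in> lang F"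
  then obtain r where r: "r \<in> lang F1" "(s, r) \<in> R1"
    using sim1 unfolding output_simulates_def by blast
  then obtain t where "t \<in> lang F2" "(r, t) \<in> R2"
    using sim2 unfolding output_simulates_def by blast
  with r show "\<exists>t \<in> lang F2. (s, t) \<in> R1 O R2" by blast
next
  fix s t assume s: "s \<in> lang F" and "(s, t) \<in> R1 O R2"
  then obtain r where sr: "(s, r) \<in> R1" and rt: "(r, t) \<in> R2" by blast
  have r: "r \<in> lang F1" and out_r: "outputs_of F1 r \<subseteq> outputs_of F s"
    using sim1 s sr unfolding output_simulates_def by blast+
  have t: "t \<in> lang F2" and out_t: "outputs_of F2 t \<subseteq> outputs_of F1 r"
    using sim2 r rt unfolding output_simulates_def by blast+
  from t show "t \<in> lang F2" .
  from out_t out_r show "outputs_of F2 t \<subseteq> outputs_of F s" by (rule subset_trans)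
qed

theorem theorem1:
  fixes F :: "('v, 'y, 'c) scdevice"
    and F1 :: "('v1, 'z, 'c) scdevice"
    and F2 :: "('v2, 'x, 'c) scdevice"
    and R1 :: "('y list \<times> 'z list) set"
    and R2 :: "('z list \<times> 'x list) set"
  assumes "scdevice F" and "scdevice F1" and "scdevice F2"
    and "output_simulates F1 F R1"
    and "output_simulates F2 F1 R2"
  shows "output_simulates F2 F (R1 O R2)"
  using assms(4,5) by (rule output_simulates_relcomp)

end
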